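(* Let $G=(N,E)$ be a DAG and write $L=\mathrm{leaves}(G)$. (a) Let $G'=(N,E')$ be a DAG satisfying Goal I for $G$, and let $\mathcal{O}'$ be a topological ordering of $G'$. Then $\tilde G'=(N,E'\cup E_L)$, where $E_L=\{(s,t): s,t\in L,\ \mathcal{O}'(s)<\mathcal{O}'(t)\}$, satisfies Goal II for $G$. (b) Let $G'=(N,E')$ be a DAG satisfying Goal II for $G$. Then $\tilde G'=(N,E'\setminus E_L)$, where $E_L=\{(s,t)\in E': s,t\in L\}$, satisfies Goal I for $G$.
   Context: DAG: finite directed graph without directed cycles; $\mathrm{pa}_G(s)$, $\mathrm{ch}_G(s)$ are the parents/children of $s$; $\mathrm{leaves}(G)=\{s:\mathrm{ch}_G(s)=\emptyset\}$, $\mathrm{roots}(G)=\{s:\mathrm{pa}_G(s)=\emptyset\}$. A topological ordering is a bijection $\mathcal{O}:N\to\{1,\dots,|N|\}$ with $(s,t)\in E\Rightarrow\mathcal{O}(s)<\mathcal{O}(t)$. Each node $s$ has a state space $\mathsf{X}_s$ (finite set with counting measure, or finite-dimensional real vector space with Lebesgue measure $\mu_s$), $\mathsf{X}_A=\times_{s\in A}\mathsf{X}_s$, $\mu=\otimes_s\mu_s$. A kernel function for $s$ in $G$ is a measurable $k^s:\mathsf{X}_s\times\mathsf{X}_{\mathrm{pa}_G(s)}\to\mathbb{R}_{\ge0}$ integrating to $1$ in $x_s$ w.r.t. $\mu_s$. $\mathcal{P}^G$ = set of probability distributions on $\mathsf{X}_N$ with a $\mu$-density $p(x)=\prod_{s\in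 N}k^s(x_s\mid x_{\mathrm{pa}_G(s)})$. For $A\subseteq N$ such that all parents in $G$ of nodes of $A$ lie in $A$, $\mathcal{K}^G$ is the set of Markov kernels $K$ from $\mathsf{X}_A$ to $\mathsf{X}_{N\setminus A}$ such that there are kernel functions $(k^s)_{s\in N\setminus A}$ with $K(\cdot,x_A)$ having density $p(x_{N\setminus A}\mid x_A)=\prod_{s\in N\setminus A}k^s(x_s\mid x_{\mathrm{pa}_G(s)})$ for every $x_A$. A Markov kernel $K$ is a version of the conditional distribution $P_{N\setminus A\mid A}$ if $P_{N}(\mathsf{B}\times\mathsf{C})=\int_{\mathsf{C}}K(\mathsf{B},x_A)\,dP_A(x_A)$ for all measurable $\mathsf{B}\subseteq\mathsf{X}_{N\setminus A}$, $\mathsf{C}\subseteq\mathsf{X}_A$. Goal I for $G$: a DAG $G'=(N,E')$ with $\mathrm{roots}(G')\supseteq\mathrm{leaves}(G)$ such that for every $P\in\mathcal{P}^G$ there exists $K\in\mathcal{K}^{G'}$ (with $A=\mathrm{leaves}(G)$) that is a version of $P_{N\setminus\mathrm{leaves}(G)\mid\mathrm{leaves}(G)}$. Goal II for $G$: a DAG $G'=(N,E')$ with $\mathcal{P}^{G'}\supseteq\mathcal{P}^G$ such that every parent in $G'$ of a node in $\mathrm{leaves}(G)$ is itself in $\mathrm{leaves}(G)$. *)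

theory Defs
  imports "HOL-Probability.Probability"
begin

definition is_dag :: "'n set \<Rightarrow> ('n \<times> 'n) set \<Rightarrow> bool" where
  "is_dag N E \<longleftrightarrow> finite N \<and> E \<subseteq> N \<times> N \<and> acyclic E"

definition pa :: "('n \<times> 'n) set \<Rightarrow> 'n \<Rightarrow> 'n set" where
  "pa E s = {t. (t, s) \<in> E}"

definition ch :: "('n \<times> 'n) set \<Rightarrow> 'n \<Rightarrow> 'n set" where
  "ch E s = {t. (s, t) \<in> E}"

definition leaves :: "'n set \<Rightarrow> ('n \<times> 'n) set \<Rightarrow> 'n set" where
  "leaves N E = {s \<in> N. ch E s = {}}"

definition roots :: "'n set \<Rightarrow> ('n \<times> 'n) set \<Rightarrow> 'n set" where
  "roots N E = {s \<in> N. pa E s = {}}"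

definition topological_ordering :: "'n set \<Rightarrow> ('n \<times> 'n) set \<Rightarrow> ('n \<Rightarrow> nat) \<Rightarrow> bool" where
  "topological_ordering N E ord \<longleftrightarrow>
     bij_betw ord N {1..card N} \<and> (\<forall>s t. (s, t) \<in> E \<longrightarrow> ord s < ord t)"

text \<open>A node state space is either a
  finite set with counting measure, or R^d with (Borel-)Lebesgue measure, represented as the
  product measure of d copies of lborel (functions on {..<d}, extensional).\<close>

definition std_space :: "(nat \<Rightarrow> real) measure \<Rightarrow> bool" where
  "std_space Ms \<longleftrightarrow>
     (\<exists>F. finite F \<and> Ms = count_space F) \<or> (\<exists>d. Ms = PiM {..<d} (\<lambda>_. lborel))"

text \<open>A kernel function for s in (N,E): k(x_s | x_pa(s)), the second argument being a
  configuration of the parents (an element of X_{pa(s)}).\<close>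

definition kernel_function ::
  "('n \<Rightarrow> 'a measure) \<Rightarrow> ('n \<times> 'n) set \<Rightarrow> 'n \<Rightarrow> ('a \<Rightarrow> ('n \<Rightarrow> 'a) \<Rightarrow> real) \<Rightarrow> bool" where
  "kernel_function M E s k \<longleftrightarrow>
     (\<lambda>(x, y). k x y) \<in> borel_measurable (M s \<Otimes>\<^sub>M PiM (pa E s) M) \<and>
     (\<forall>x \<in> space (M s). \<forall>y \<in> space (PiM (pa E s) M). 0 \<le> k x y) \<and>
     (\<forall>y \<in> space (PiM (pa E s) M). (\<integral>\<^sup>+ x. ennreal (k x y) \<partial>M s) = 1)"

definition PG :: "'n set \<Rightarrow> ('n \<times> 'n) set \<Rightarrow> ('n \<Rightarrow> 'a measure) \<Rightarrow> ('n \<Rightarrow> 'a) measure set" where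
  "PG N E M = {P. prob_space P \<and>
     (\<exists>k. (\<forall>s\<in>N. kernel_function M E s (k s)) \<and>
          P = density (PiM N M) (\<lambda>x. \<Prod>s\<in>N. ennreal (k s (x s) (restrict x (pa E s)))))}"

text \<open>The set K^G (for a set A closed under parents): Markov kernels from X_A to X_{N-A}
  whose value at x_A has density prod_{s in N-A} k^s(x_s | x_pa(s)) w.r.t. mu_{N-A}; the parent
  configuration is taken from the merged configuration (x_A, x_{N-A}).\<close>

definition KG :: "'n set \<Rightarrow> ('n \<times> 'n) set \<Rightarrow> ('n \<Rightarrow> 'a measure) \<Rightarrow> 'n set
                   \<Rightarrow> (('n \<Rightarrow> 'a) \<Rightarrow> ('n \<Rightarrow> 'a) measure) set" where
  "KG N E M A = {K. K \<in> PiM A M \<rightarrow>\<^sub>M prob_algebra (PiM (N - A) M) \<and>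
     (\<exists>k. (\<forall>s\<in>N - A. kernel_function M E s (k s)) \<and>
          (\<forall>xA \<in> space (PiM A M).
             K xA = density (PiM (N - A) M)
               (\<lambda>y. \<Prod>s\<in>N - A. ennreal (k s (y s) (restrict (merge A (N - A) (xA, y)) (pa E s))))))}"

definition version_of_conditional ::
  "'n set \<Rightarrow> ('n \<Rightarrow> 'a measure) \<Rightarrow> 'n set \<Rightarrow> ('n \<Rightarrow> 'a) measure
     \<Rightarrow> (('n \<Rightarrow> 'a) \<Rightarrow> ('n \<Rightarrow> 'a) measure) \<Rightarrow> bool" where
  "version_of_conditional N M A P K \<longleftrightarrow>
     (\<forall>B \<in> sets (PiM (N - A) M). \<forall>C \<in> sets (PiM A M).
        emeasure P {x \<in> space P. restrict x (N - A) \<in> B \<and> restrict x A \<in> C}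
        = (\<integral>\<^sup>+ xA \<in> C. emeasure (K xA) B \<partial>(distr P (PiM A M) (\<lambda>x. restrict x A))))"

definition goal_I :: "'n set \<Rightarrow> ('n \<times> 'n) set \<Rightarrow> ('n \<Rightarrow> 'a measure) \<Rightarrow> ('n \<times> 'n) set \<Rightarrow> bool" where
  "goal_I N E M E' \<longleftrightarrow> is_dag N E' \<and> leaves N E \<subseteq> roots N E' \<and>
     (\<forall>P \<in> PG N E M. \<exists>K \<in> KG N E' M (leaves N E).
        version_of_conditional N M (leaves N E) P K)"

definition goal_II :: "'n set \<Rightarrow> ('n \<times> 'n) set \<Rightarrow> ('n \<Rightarrow> 'a measure) \<Rightarrow> ('n \<times> 'n) set \<Rightarrow> bool" where
  "goal_II N E M E' \<longleftrightarrow> is_dag N E' \<and> PG N E M \<subseteq> PG N E' M \<and>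
     (\<forall>s \<in> leaves N E. pa E' s \<subseteq> leaves N E)"

end

theory Submission
  imports Defs
begin

(* With L the leaves and R = N - L, suppose the parents of every leaf are leaves.  Then a DAG
   density factorises as p(x_L, x_R) = f(x_L) g(x_L, x_R), where f is the product of the leaf
   kernels and g the product of the others.  Integrating out the kernels of R one sink at a time
   shows that g(x_L, -) is a probability density.  Hence f is the marginal density of x_L, and
   x_L |-> g(x_L, -) is a version of P_{R|L}.  This gives (b): dropping the edges inside L turns
   the leaves into roots and leaves the kernels of R unchanged.

   For (a), Goal I supplies the conditional kernel K.  By the chain rule with conditional
   densities, the marginal density of x_L, like any probability density on a finite product,
   factorises along a linear order of L into kernels whose parents are the smaller leaves.
   Joining these kernels with those of K gives a density for the completed graph.  It defines
   the same measure as P because both agree on measurable rectangles: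
   P(B x C) = int_C K(x_L, B) dP_L. *)

section \<open>Kernel densities\<close>

definition kernel_density ::
  "('n \<times> 'n) set \<Rightarrow> ('n \<Rightarrow> 'a \<Rightarrow> ('n \<Rightarrow> 'a) \<Rightarrow> real) \<Rightarrow> 'n set \<Rightarrow> ('n \<Rightarrow> 'a) \<Rightarrow> ennreal" where
  "kernel_density E k D x = (\<Prod>s\<in>D. ennreal (k s (x s) (restrict x (pa E s))))"

definition prob_density :: "'a measure \<Rightarrow> ('a \<Rightarrow> real) \<Rightarrow> bool" where
  "prob_density Ms \<phi> \<longleftrightarrow>
     \<phi> \<in> borel_measurable Ms \<and> (\<forall>x. 0 \<le> \<phi> x) \<and> (\<integral>\<^sup>+x. ennreal (\<phi> x) \<partial>Ms) = 1"

lemma acyclic_finite_obtains_maximal: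
  assumes "finite D" "D \<noteq> {}" "acyclic R"
  obtains m where "m \<in> D" "\<And>t. t \<in> D \<Longrightarrow> (m, t) \<notin> R"
proof -
  have "wf ((R \<inter> D \<times> D)\<inverse>)"
    using assms by (intro finite_acyclic_wf_converse) (auto intro: acyclic_subset finite_subset)
  then obtain m where "m \<in> D" "\<And>t. (t, m) \<in> (R \<inter> D \<times> D)\<inverse> \<Longrightarrow> t \<notin> D"
    using \<open>D \<noteq> {}\<close> unfolding wf_eq_minimal by blast
  then show thesis using that by blast
qed

lemma kernel_functionD:
  assumes "kernel_function M E s k" "w \<in> space (PiM (pa E s) M)"
  shows "(\<lambda>x. ennreal (k x w)) \<in> borel_measurable (M s)" "(\<integral>\<^sup>+x. ennreal (k x w) \<partial>M s) = 1"
proof -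
  have "(\<lambda>(x, y). k x y) \<in> borel_measurable (M s \<Otimes>\<^sub>M PiM (pa E s) M)"
    using assms(1) by (simp add: kernel_function_def)
  from measurable_compose[OF measurable_Pair2'[OF assms(2)] this]
  show "(\<lambda>x. ennreal (k x w)) \<in> borel_measurable (M s)" by simp
  show "(\<integral>\<^sup>+x. ennreal (k x w) \<partial>M s) = 1"
    using assms by (simp add: kernel_function_def)
qed

lemma measurable_kernel_density:
  assumes "finite D" "\<forall>s\<in>D. kernel_function M E s (k s)" "\<forall>s\<in>D. s \<in> I \<and> pa E s \<subseteq> I"
    and f: "f \<in> X \<rightarrow>\<^sub>M PiM I M"
  shows "(\<lambda>x. kernel_density E k D (f x)) \<in> borel_measurable X"
  unfolding kernel_density_def
proof (rule borel_measurable_prod_ennreal)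
  fix s assume s: "s \<in> D"
  have "(\<lambda>x. (f x s, restrict (f x) (pa E s))) \<in> X \<rightarrow>\<^sub>M (M s \<Otimes>\<^sub>M PiM (pa E s) M)"
    using s assms(3) measurable_compose[OF f measurable_component_singleton]
      measurable_compose[OF f measurable_restrict_subset] by (intro measurable_Pair) auto
  moreover have "(\<lambda>(x, y). k s x y) \<in> borel_measurable (M s \<Otimes>\<^sub>M PiM (pa E s) M)"
    using s assms(2) by (simp add: kernel_function_def)
  ultimately show "(\<lambda>x. ennreal (k s (f x s) (restrict (f x) (pa E s)))) \<in> borel_measurable X"
    using measurable_compose by fastforce
qed

lemma kernel_density_cong:
  assumes "\<And>s. s \<in> D \<Longrightarrow> pa E s = pa E' s" "\<And>s. s \<in> D \<Longrightarrow> k s = k' s"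
    and "\<And>i. i \<in> D \<union> (\<Union>s\<in>D. pa E s) \<Longrightarrow> x i = x' i"
  shows "kernel_density E k D x = kernel_density E' k' D x'"
  unfolding kernel_density_def
proof (rule prod.cong[OF refl])
  fix s assume s: "s \<in> D"
  have "restrict x (pa E s) = restrict x' (pa E s)"
    using s assms(3) by (intro restrict_ext) auto
  then show "ennreal (k s (x s) (restrict x (pa E s))) = ennreal (k' s (x' s) (restrict x' (pa E' s)))"
    using s assms by simp
qed

lemma kernel_density_insert_upd:
  assumes "finite D" "m \<notin> D" "\<And>s. s \<in> insert m D \<Longrightarrow> m \<notin> pa E s"
  shows "kernel_density E k (insert m D) (x(m := y))
       = ennreal (k m y (restrict x (pa E m))) * kernel_density E k D x"
proof -
  have "restrict (x(m := y)) (pa E m) = restrict x (pa E m)"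
    using assms(3) by (intro restrict_ext) auto
  moreover have "kernel_density E k D (x(m := y)) = kernel_density E k D x"
    using assms by (intro kernel_density_cong) auto
  ultimately show ?thesis
    using assms(1,2) by (simp add: kernel_density_def)
qed

lemma kernel_density_merge_split:
  assumes "finite N" "L \<subseteq> N" "\<And>s. s \<in> L \<Longrightarrow> pa E s \<subseteq> L"
  shows "kernel_density E (\<lambda>s. if s \<in> L then kL s else kR s) N (merge L (N - L) (z, y))
       = kernel_density E kL L z * kernel_density E kR (N - L) (merge L (N - L) (z, y))"
proof -
  let ?k = "\<lambda>s. if s \<in> L then kL s else kR s" and ?x = "merge L (N - L) (z, y)"
  have "kernel_density E ?k N ?x = kernel_density E ?k L ?x * kernel_density E ?k (N - L) ?x"
    unfolding kernel_density_def by (subst prod.subset_diff[OF assms(2,1)]) (rule mult.commute)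
  moreover have "kernel_density E ?k L ?x = kernel_density E kL L z"
    using assms(3) by (intro kernel_density_cong) (auto simp: merge_def)
  moreover have "kernel_density E ?k (N - L) ?x = kernel_density E kR (N - L) ?x"
    by (intro kernel_density_cong) auto
  ultimately show ?thesis by simp
qed

lemma merge_insert_upd:
  "m \<notin> A \<Longrightarrow> merge A (insert m D) (z, x(m := y)) = (merge A D (z, x))(m := y)"
  by (auto simp: merge_def fun_eq_iff)

lemma (in product_sigma_finite) nn_integral_kernel_density_sink:
  assumes "finite D" "m \<notin> D" "m \<notin> A" "\<And>s. s \<in> insert m D \<Longrightarrow> m \<notin> pa E s"
    and "pa E m \<subseteq> A \<union> D" "kernel_function M E m (k m)"
    and z: "z \<in> space (PiM A M)" and x: "x \<in> space (PiM D M)"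
  shows "(\<integral>\<^sup>+y. kernel_density E k (insert m D) (merge A (insert m D) (z, x(m := y))) \<partial>M m)
       = kernel_density E k D (merge A D (z, x))"
proof -
  let ?w = "restrict (merge A D (z, x)) (pa E m)"
  have "merge A D (z, x) \<in> space (PiM (A \<union> D) M)"
    using measurable_space[OF measurable_merge, of "(z, x)" A M D] z x
    by (simp add: space_pair_measure)
  then have w: "?w \<in> space (PiM (pa E m) M)"
    using assms(5) by (auto simp: space_PiM PiE_iff)
  have "kernel_density E k (insert m D) (merge A (insert m D) (z, x(m := y)))
      = ennreal (k m y ?w) * kernel_density E k D (merge A D (z, x))" for y
    unfolding merge_insert_upd[OF assms(3)] by (rule kernel_density_insert_upd[OF assms(1,2,4)])
  then show ?thesis
    using kernel_functionD[OF assms(6) w] by (simp add: nn_integral_multc)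
qed

lemma (in product_sigma_finite) nn_integral_kernel_density_eq_1:
  assumes "finite D" "acyclic E" "A \<inter> D = {}"
    and "\<forall>s\<in>D. kernel_function M E s (k s)" "\<forall>s\<in>D. pa E s \<subseteq> A \<union> D"
    and z: "z \<in> space (PiM A M)"
  shows "(\<integral>\<^sup>+y. kernel_density E k D (merge A D (z, y)) \<partial>PiM D M) = 1"
  using assms(1,3-5)
proof (induction D rule: finite_psubset_induct)
  case (psubset D)
  show ?case
  proof (cases "D = {}")
    case True
    then show ?thesis by (simp add: kernel_density_def PiM_empty)
  next
    case False
    obtain m where m: "m \<in> D" "\<And>t. t \<in> D \<Longrightarrow> (m, t) \<notin> E"
      using acyclic_finite_obtains_maximal[OF psubset(1) False assms(2)] by blast
    define D0 where "D0 = D - {m}"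
    have D: "D = insert m D0" "m \<notin> D0" "finite D0" "D0 \<subset> D"
      using m psubset(1) by (auto simp: D0_def)
    have m_pa: "m \<notin> pa E s" if "s \<in> D" for s
      using m that by (auto simp: pa_def)
    have "\<forall>s\<in>D0. pa E s \<subseteq> A \<union> D0"
      using psubset(5) m_pa D by blast
    then have IH: "(\<integral>\<^sup>+y. kernel_density E k D0 (merge A D0 (z, y)) \<partial>PiM D0 M) = 1"
      using psubset(3,4) D by (intro psubset(2)) auto
    have "(\<lambda>y. kernel_density E k D (merge A D (z, y))) \<in> borel_measurable (PiM D M)"
      using psubset(1,4,5) z by (intro measurable_kernel_density[where I = "A \<union> D"]) auto
    then have "(\<integral>\<^sup>+y. kernel_density E k D (merge A D (z, y)) \<partial>PiM D M)
        = (\<integral>\<^sup>+x. (\<integral>\<^sup>+y. kernel_density E k D (merge A D (z, x(m := y))) \<partial>M m) \<partial>PiM D0 M)"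
      using product_nn_integral_insert[OF D(3,2)] D(1) by simp
    also have "\<dots> = (\<integral>\<^sup>+x. kernel_density E k D0 (merge A D0 (z, x)) \<partial>PiM D0 M)"
    proof (rule nn_integral_cong)
      fix x assume "x \<in> space (PiM D0 M)"
      moreover have "m \<notin> A" "pa E m \<subseteq> A \<union> D0"
        using psubset(3,5) m m_pa D by blast+
      ultimately show "(\<integral>\<^sup>+y. kernel_density E k D (merge A D (z, x(m := y))) \<partial>M m)
          = kernel_density E k D0 (merge A D0 (z, x))"
        unfolding D(1) using D(2,3) m_pa psubset(4) m(1) z
        by (intro nn_integral_kernel_density_sink) (auto simp: D(1))
    qed
    finally show ?thesis using IH by simp
  qed
qed

section \<open>Marginals and the chain rule\<close>

lemma restrict_merge_left: "z \<in> space (PiM L M) \<Longrightarrow> restrict (merge L R (z, y)) L = z"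
  by (auto simp: merge_def space_PiM PiE_def extensional_def restrict_def fun_eq_iff)

lemma restrict_merge_right:
  "L \<inter> R = {} \<Longrightarrow> y \<in> space (PiM R M) \<Longrightarrow> restrict (merge L R (z, y)) R = y"
  by (auto simp: merge_def space_PiM PiE_def extensional_def restrict_def fun_eq_iff)

lemma measurable_merge_compose:
  assumes "f \<in> borel_measurable (PiM N M)" "L \<subseteq> N"
  shows "(\<lambda>(z, y). f (merge L (N - L) (z, y))) \<in> borel_measurable (PiM L M \<Otimes>\<^sub>M PiM (N - L) M)"
proof -
  have "f \<in> borel_measurable (PiM (L \<union> (N - L)) M)"
    using assms by (simp add: Un_absorb1)
  from measurable_compose[OF measurable_merge this] show ?thesis
    by (simp add: split_beta')
qed

lemma (in product_sigma_finite) distr_restrict_density: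
  assumes "finite N" "L \<subseteq> N" and p[measurable]: "p \<in> borel_measurable (PiM N M)"
  shows "distr (density (PiM N M) p) (PiM L M) (\<lambda>x. restrict x L)
       = density (PiM L M) (\<lambda>z. \<integral>\<^sup>+y. p (merge L (N - L) (z, y)) \<partial>PiM (N - L) M)"
    (is "_ = density _ ?q")
proof (rule measure_eqI)
  have U: "L \<union> (N - L) = N" using assms(2) by blast
  have fin: "finite L" "finite (N - L)" using assms(1,2) finite_subset by auto
  interpret R: sigma_finite_measure "PiM (N - L) M" by (rule sigma_finite[OF fin(2)])
  have p_merge[measurable]: "(\<lambda>(z, y). p (merge L (N - L) (z, y))) \<in> borel_measurable (PiM L M \<Otimes>\<^sub>M PiM (N - L) M)"
    by (rule measurable_merge_compose[OF p assms(2)])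
  have q[measurable]: "?q \<in> borel_measurable (PiM L M)"
    by (rule R.borel_measurable_nn_integral) simp
  have rL[measurable]: "(\<lambda>x. restrict x L) \<in> PiM N M \<rightarrow>\<^sub>M PiM L M"
    by (rule measurable_restrict_subset[OF assms(2)])
  fix A assume "A \<in> sets (distr (density (PiM N M) p) (PiM L M) (\<lambda>x. restrict x L))"
  then have A[measurable]: "A \<in> sets (PiM L M)" by simp
  have "emeasure (distr (density (PiM N M) p) (PiM L M) (\<lambda>x. restrict x L)) A
      = (\<integral>\<^sup>+x. p x * indicator A (restrict x L) \<partial>PiM N M)"
    by (simp add: emeasure_distr emeasure_density indicator_def of_bool_def mult_ac cong: nn_integral_cong)
  also have "\<dots> = (\<integral>\<^sup>+z. (\<integral>\<^sup>+y. p (merge L (N - L) (z, y)) * indicator A (restrict (merge L (N - L) (z, y)) L) \<partial>PiM (N - L) M) \<partial>PiM L M)"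
    using product_nn_integral_fold[OF _ fin, of "\<lambda>x. p x * indicator A (restrict x L)"] U by simp
  also have "\<dots> = (\<integral>\<^sup>+z. ?q z * indicator A z \<partial>PiM L M)"
  proof (rule nn_integral_cong)
    fix z assume z: "z \<in> space (PiM L M)"
    then have "restrict (merge L (N - L) (z, y)) L = z" for y
      by (rule restrict_merge_left)
    moreover have "(\<lambda>y. p (merge L (N - L) (z, y))) \<in> borel_measurable (PiM (N - L) M)"
      using z by simp
    ultimately show "(\<integral>\<^sup>+y. p (merge L (N - L) (z, y)) * indicator A (restrict (merge L (N - L) (z, y)) L) \<partial>PiM (N - L) M)
       = ?q z * indicator A z"
      by (simp add: nn_integral_multc)
  qed
  also have "\<dots> = emeasure (density (PiM L M) ?q) A"
    by (simp add: emeasure_density)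
  finally show "emeasure (distr (density (PiM N M) p) (PiM L M) (\<lambda>x. restrict x L)) A = emeasure (density (PiM L M) ?q) A" .
qed simp

(* Where the marginal of z is 0 or infinite, the conditional density of x_m is arbitrary;
   the probability density phi fills in. *)
definition conditional_density ::
  "'a measure \<Rightarrow> 'i \<Rightarrow> (('i \<Rightarrow> 'a) \<Rightarrow> ennreal) \<Rightarrow> ('a \<Rightarrow> real) \<Rightarrow> 'a \<Rightarrow> ('i \<Rightarrow> 'a) \<Rightarrow> real" where
  "conditional_density Mm m q \<phi> y z =
     (if (\<integral>\<^sup>+y'. q (z(m := y')) \<partial>Mm) \<in> {0, \<infinity>} then \<phi> y
      else enn2real (q (z(m := y)) / (\<integral>\<^sup>+y'. q (z(m := y')) \<partial>Mm)))"

lemma (in product_sigma_finite) measurable_marginal_upd: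
  assumes "m \<notin> S" "q \<in> borel_measurable (PiM (insert m S) M)"
  shows "(\<lambda>z. \<integral>\<^sup>+y. q (z(m := y)) \<partial>M m) \<in> borel_measurable (PiM S M)"
proof -
  have "(\<lambda>(z, y). q (z(m := y))) \<in> borel_measurable (PiM S M \<Otimes>\<^sub>M M m)"
    using measurable_compose[OF measurable_add_dim assms(2)] by (simp add: split_beta')
  then show ?thesis
    by (rule sigma_finite_measure.borel_measurable_nn_integral[OF sigma_finite_measures])
qed

lemma (in product_sigma_finite) kernel_function_conditional_density:
  assumes "m \<notin> S" "pa E m = S"
    and q[measurable]: "q \<in> borel_measurable (PiM (insert m S) M)"
    and \<phi>: "prob_density (M m) \<phi>"
  shows "kernel_function M E m (conditional_density (M m) m q \<phi>)"
  unfolding kernel_function_def \<open>pa E m = S\<close>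
proof (intro conjI ballI)
  define q0 where "q0 z = (\<integral>\<^sup>+y. q (z(m := y)) \<partial>M m)" for z
  have c: "conditional_density (M m) m q \<phi> y z = (if q0 z \<in> {0, \<infinity>} then \<phi> y else enn2real (q (z(m := y)) / q0 z))"
    for y z by (simp add: conditional_density_def q0_def)
  have [measurable]: "q0 \<in> borel_measurable (PiM S M)" "\<phi> \<in> borel_measurable (M m)"
    using measurable_marginal_upd[OF assms(1) q] \<phi> by (simp_all add: q0_def[abs_def] prob_density_def)
  show "(\<lambda>(y, z). conditional_density (M m) m q \<phi> y z) \<in> borel_measurable (M m \<Otimes>\<^sub>M PiM S M)"
    unfolding c by measurable
  fix z assume z: "z \<in> space (PiM S M)"
  show "0 \<le> conditional_density (M m) m q \<phi> y z" for y
    using \<phi> by (simp add: c prob_density_def)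
  show "(\<integral>\<^sup>+y. ennreal (conditional_density (M m) m q \<phi> y z) \<partial>M m) = 1"
  proof (cases "q0 z \<in> {0, \<infinity>}")
    case False
    have q_z: "(\<lambda>y. q (z(m := y))) \<in> borel_measurable (M m)"
      using measurable_compose[OF measurable_component_update[OF z assms(1)] q] by simp
    have int_1: "(\<integral>\<^sup>+y. q (z(m := y)) / q0 z \<partial>M m) = 1"
      using False q_z by (simp add: nn_integral_divide q0_def[symmetric] less_top)
    then have "AE y in M m. q (z(m := y)) / q0 z \<noteq> \<infinity>"
      using q_z by (intro nn_integral_PInf_AE) simp_all
    then have "(\<integral>\<^sup>+y. ennreal (conditional_density (M m) m q \<phi> y z) \<partial>M m) = (\<integral>\<^sup>+y. q (z(m := y)) / q0 z \<partial>M m)"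
      using False by (intro nn_integral_cong_AE) (auto simp: c less_top)
    then show ?thesis using int_1 by simp
  qed (use \<phi> in \<open>simp add: c prob_density_def\<close>)
qed

lemma (in product_sigma_finite) AE_conditional_density:
  assumes "m \<notin> S" and q[measurable]: "q \<in> borel_measurable (PiM (insert m S) M)"
    and finite_integral: "(\<integral>\<^sup>+z. (\<integral>\<^sup>+y. q (z(m := y)) \<partial>M m) \<partial>PiM S M) \<noteq> \<infinity>"
  shows "AE z in PiM S M. AE y in M m.
           q (z(m := y)) = ennreal (conditional_density (M m) m q \<phi> y z) * (\<integral>\<^sup>+y'. q (z(m := y')) \<partial>M m)"
proof -
  define q0 where "q0 z = (\<integral>\<^sup>+y. q (z(m := y)) \<partial>M m)" for z
  have [measurable]: "q0 \<in> borel_measurable (PiM S M)"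
    using measurable_marginal_upd[OF assms(1) q] by (simp add: q0_def[abs_def])
  have "AE y in M m. q (z(m := y)) = ennreal (conditional_density (M m) m q \<phi> y z) * q0 z"
    if z: "z \<in> space (PiM S M)" and fin: "q0 z \<noteq> \<infinity>" for z
  proof -
    have q_z: "(\<lambda>y. q (z(m := y))) \<in> borel_measurable (M m)"
      using measurable_compose[OF measurable_component_update[OF z assms(1)] q] by simp
    show ?thesis
    proof (cases "q0 z = 0")
      case True
      then have "AE y in M m. q (z(m := y)) = 0"
        using q_z by (subst nn_integral_0_iff_AE[symmetric]) (simp_all add: q0_def)
      then show ?thesis by eventually_elim (simp add: True)
    next
      case False
      have "AE y in M m. q (z(m := y)) \<noteq> \<infinity>"
        using q_z fin by (intro nn_integral_PInf_AE) (simp_all add: q0_def)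
      then show ?thesis
      proof eventually_elim
        case (elim y)
        then have "q (z(m := y)) / q0 z \<noteq> \<infinity>"
          using False by (simp add: ennreal_divide_eq_top_iff)
        then show ?case
          using False fin
          by (auto simp: conditional_density_def q0_def[symmetric] less_top ennreal_mult_divide_eq ennreal_divide_times)
      qed
    qed
  qed
  moreover have "AE z in PiM S M. q0 z \<noteq> \<infinity>"
    using finite_integral by (intro nn_integral_PInf_AE) (simp_all add: q0_def)
  ultimately show ?thesis
    unfolding q0_def by (auto elim: AE_mp)
qed

lemma (in product_sigma_finite) density_insert_eqI:
  assumes "finite S" "m \<notin> S"
    and q[measurable]: "q \<in> borel_measurable (PiM (insert m S) M)"
    and c[measurable]: "(\<lambda>(y, z). c y z) \<in> borel_measurable (M m \<Otimes>\<^sub>M PiM S M)"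
    and F0[measurable]: "F0 \<in> borel_measurable (PiM S M)"
    and marginal: "density (PiM S M) (\<lambda>z. \<integral>\<^sup>+y. q (z(m := y)) \<partial>M m) = density (PiM S M) F0"
    and factor: "AE z in PiM S M. AE y in M m. q (z(m := y)) = c y z * (\<integral>\<^sup>+y'. q (z(m := y')) \<partial>M m)"
  shows "density (PiM (insert m S) M) q
       = density (PiM (insert m S) M) (\<lambda>x. c (x m) (restrict x S) * F0 (restrict x S))"
    (is "_ = density _ ?F")
proof (rule measure_eqI)
  define q0 where "q0 z = (\<integral>\<^sup>+y. q (z(m := y)) \<partial>M m)" for z
  have q0[measurable]: "q0 \<in> borel_measurable (PiM S M)"
    unfolding q0_def[abs_def] by (rule measurable_marginal_upd[OF assms(2) q])
  have F[measurable]: "?F \<in> borel_measurable (PiM (insert m S) M)"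
    by measurable
  fix A assume "A \<in> sets (density (PiM (insert m S) M) q)"
  then have A[measurable]: "A \<in> sets (PiM (insert m S) M)" by simp
  \<comment> \<open>Both sides integrate the c-conditional mass h of A against the same marginal of z.\<close>
  define h where "h z = (\<integral>\<^sup>+y. c y z * indicator A (z(m := y)) \<partial>M m)" for z
  have "(\<lambda>(z, y). c y z * indicator A (z(m := y))) \<in> borel_measurable (PiM S M \<Otimes>\<^sub>M M m)"
    by measurable
  then have h[measurable]: "h \<in> borel_measurable (PiM S M)"
    unfolding h_def by (rule sigma_finite_measure.borel_measurable_nn_integral[OF sigma_finite_measures])
  have "emeasure (density (PiM (insert m S) M) q) A = (\<integral>\<^sup>+x. q x * indicator A x \<partial>PiM (insert m S) M)"
    by (rule emeasure_density) simp_all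
  also have "\<dots> = (\<integral>\<^sup>+z. (\<integral>\<^sup>+y. q (z(m := y)) * indicator A (z(m := y)) \<partial>M m) \<partial>PiM S M)"
    by (rule product_nn_integral_insert[OF assms(1,2)]) simp
  also have "\<dots> = (\<integral>\<^sup>+z. q0 z * h z \<partial>PiM S M)"
  proof (rule nn_integral_cong_AE)
    have inner: "(\<integral>\<^sup>+y. q (z(m := y)) * indicator A (z(m := y)) \<partial>M m) = q0 z * h z"
      if z: "z \<in> space (PiM S M)" and AE_y: "AE y in M m. q (z(m := y)) = c y z * q0 z" for z
    proof -
      have "(\<integral>\<^sup>+y. q (z(m := y)) * indicator A (z(m := y)) \<partial>M m)
          = (\<integral>\<^sup>+y. q0 z * (c y z * indicator A (z(m := y))) \<partial>M m)"
        using AE_y by (intro nn_integral_cong_AE) (auto simp: mult_ac elim: AE_mp)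
      also have "\<dots> = q0 z * h z"
        unfolding h_def using z by (intro nn_integral_cmult) measurable
      finally show ?thesis .
    qed
    show "AE z in PiM S M. (\<integral>\<^sup>+y. q (z(m := y)) * indicator A (z(m := y)) \<partial>M m) = q0 z * h z"
      using factor AE_space by eventually_elim (rule inner, simp_all add: q0_def)
  qed
  also have "\<dots> = integral\<^sup>N (density (PiM S M) q0) h"
    by (rule nn_integral_density[symmetric]) simp_all
  also have "\<dots> = integral\<^sup>N (density (PiM S M) F0) h"
    using marginal by (simp add: q0_def[abs_def])
  also have "\<dots> = (\<integral>\<^sup>+z. F0 z * h z \<partial>PiM S M)"
    by (rule nn_integral_density) simp_all
  also have "\<dots> = (\<integral>\<^sup>+z. (\<integral>\<^sup>+y. ?F (z(m := y)) * indicator A (z(m := y)) \<partial>M m) \<partial>PiM S M)"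
  proof (rule nn_integral_cong)
    fix z assume z: "z \<in> space (PiM S M)"
    then have "restrict (z(m := y)) S = z" for y
      using \<open>m \<notin> S\<close> by (auto simp: space_PiM PiE_def extensional_def restrict_def fun_eq_iff)
    then have "(\<integral>\<^sup>+y. ?F (z(m := y)) * indicator A (z(m := y)) \<partial>M m)
        = (\<integral>\<^sup>+y. F0 z * (c y z * indicator A (z(m := y))) \<partial>M m)"
      by (simp add: mult_ac)
    also have "\<dots> = F0 z * h z"
      unfolding h_def using z by (intro nn_integral_cmult) measurable
    finally show "F0 z * h z = (\<integral>\<^sup>+y. ?F (z(m := y)) * indicator A (z(m := y)) \<partial>M m)" ..
  qed
  also have "\<dots> = (\<integral>\<^sup>+x. ?F x * indicator A x \<partial>PiM (insert m S) M)"
    by (rule product_nn_integral_insert[OF assms(1,2), symmetric]) simp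
  also have "\<dots> = emeasure (density (PiM (insert m S) M) ?F) A"
    by (rule emeasure_density[symmetric]) simp_all
  finally show "emeasure (density (PiM (insert m S) M) q) A = emeasure (density (PiM (insert m S) M) ?F) A" .
qed simp

lemma kernel_density_insert_restrict:
  assumes "finite S" "m \<notin> S" "pa E m = S" "\<forall>s\<in>S. pa E s \<subseteq> S"
  shows "kernel_density E (k(m := c)) (insert m S) x
       = ennreal (c (x m) (restrict x S)) * kernel_density E k S (restrict x S)"
proof -
  have "kernel_density E (k(m := c)) S x = kernel_density E k S (restrict x S)"
    using assms(2,4) by (intro kernel_density_cong) auto
  then show ?thesis
    using assms(1-3) by (simp add: kernel_density_def)
qed

lemma (in product_sigma_finite) chain_rule_step:
  assumes "finite S" "m \<notin> S" "pa E m = S" "\<forall>s\<in>S. pa E s \<subseteq> S"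
    and q[measurable]: "q \<in> borel_measurable (PiM (insert m S) M)"
    and finite_integral: "(\<integral>\<^sup>+z. (\<integral>\<^sup>+y. q (z(m := y)) \<partial>M m) \<partial>PiM S M) \<noteq> \<infinity>"
    and \<phi>: "prob_density (M m) \<phi>"
    and k: "\<forall>s\<in>S. kernel_function M E s (k s)"
    and marginal: "density (PiM S M) (\<lambda>z. \<integral>\<^sup>+y. q (z(m := y)) \<partial>M m) = density (PiM S M) (kernel_density E k S)"
  shows "density (PiM (insert m S) M) q
       = density (PiM (insert m S) M) (kernel_density E (k(m := conditional_density (M m) m q \<phi>)) (insert m S))"
proof -
  let ?c = "conditional_density (M m) m q \<phi>"
  have "(\<lambda>(y, z). ?c y z) \<in> borel_measurable (M m \<Otimes>\<^sub>M PiM S M)"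
    using kernel_function_conditional_density[OF assms(2,3) q \<phi>] assms(3)
    by (simp add: kernel_function_def)
  from measurable_compose[OF this measurable_ennreal]
  have [measurable]: "(\<lambda>(y, z). ennreal (?c y z)) \<in> borel_measurable (M m \<Otimes>\<^sub>M PiM S M)"
    by (simp add: split_beta')
  have [measurable]: "kernel_density E k S \<in> borel_measurable (PiM S M)"
    using assms(4) by (intro measurable_kernel_density[OF assms(1) k _ measurable_ident_sets[OF refl]]) blast
  have "density (PiM (insert m S) M) q
      = density (PiM (insert m S) M) (\<lambda>x. ennreal (?c (x m) (restrict x S)) * kernel_density E k S (restrict x S))"
    by (rule density_insert_eqI[OF assms(1,2) q _ _ marginal AE_conditional_density[OF assms(2) q finite_integral]])
      simp_all
  also have "\<dots> = density (PiM (insert m S) M) (kernel_density E (k(m := ?c)) (insert m S))"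
    by (rule arg_cong[where f = "density (PiM (insert m S) M)"])
      (simp add: fun_eq_iff kernel_density_insert_restrict[OF assms(1-4)])
  finally show ?thesis .
qed

lemma (in product_sigma_finite) chain_rule_kernel_density:
  fixes ord :: "'i \<Rightarrow> nat"
  assumes "finite L" "inj_on ord L"
    and "\<forall>s\<in>L. \<exists>\<phi>. prob_density (M s) \<phi>"
    and "\<forall>s\<in>L. pa E s = {t\<in>L. ord t < ord s}"
    and "q \<in> borel_measurable (PiM L M)" "(\<integral>\<^sup>+x. q x \<partial>PiM L M) = 1"
  shows "\<exists>k. (\<forall>s\<in>L. kernel_function M E s (k s))
           \<and> density (PiM L M) q = density (PiM L M) (kernel_density E k L)"
  using assms
proof (induction L arbitrary: q rule: finite_ranking_induct[where f = ord])
  case empty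
  then have "q (\<lambda>_. undefined) = 1"
    by (simp add: nn_integral_empty)
  then have "density (PiM {} M) q = density (PiM {} M) (kernel_density E k {})" for k
    using empty.prems(4) unfolding kernel_density_def
    by (intro density_cong) (auto simp: space_PiM_empty)
  then show ?case by blast
next
  case (insert m S)
  show ?case
  proof (cases "m \<in> S")
    case True
    then show ?thesis
      using insert.IH insert.prems by (simp add: insert_absorb)
  next
    case False
    note q = insert.prems(4)
    have ord_less: "ord t < ord m" if "t \<in> S" for t
      using le_neq_trans[OF insert.hyps(2)[OF that] inj_on_contraD[OF insert.prems(1)]] that False
      by auto
    have pa_S: "\<forall>s\<in>S. pa E s = {t\<in>S. ord t < ord s}"
      using insert.prems(3) ord_less by (auto dest: less_trans)
    have pa_m: "pa E m = S"
      using insert.prems(3) ord_less by auto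
    define q0 where "q0 z = (\<integral>\<^sup>+y. q (z(m := y)) \<partial>M m)" for z
    have q0: "q0 \<in> borel_measurable (PiM S M)"
      unfolding q0_def[abs_def] by (rule measurable_marginal_upd[OF False q])
    have q0_1: "(\<integral>\<^sup>+z. q0 z \<partial>PiM S M) = 1"
      using product_nn_integral_insert[OF insert.hyps(1) False q] insert.prems(5)
      by (simp add: q0_def fun_upd_def)
    obtain k where k: "\<forall>s\<in>S. kernel_function M E s (k s)"
      and marginal: "density (PiM S M) q0 = density (PiM S M) (kernel_density E k S)"
      using insert.IH[OF inj_on_subset[OF insert.prems(1) subset_insertI] _ pa_S q0 q0_1]
        insert.prems(2) by blast
    obtain \<phi> where \<phi>: "prob_density (M m) \<phi>"
      using insert.prems(2) by blast
    have "(\<integral>\<^sup>+z. (\<integral>\<^sup>+y. q (z(m := y)) \<partial>M m) \<partial>PiM S M) \<noteq> \<infinity>"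
      using q0_1 by (simp add: q0_def)
    from chain_rule_step[OF insert.hyps(1) False pa_m _ q this \<phi> k marginal[unfolded q0_def[abs_def]]]
    have "density (PiM (insert m S) M) q
        = density (PiM (insert m S) M) (kernel_density E (k(m := conditional_density (M m) m q \<phi>)) (insert m S))"
      using pa_S by blast
    moreover have "\<forall>s\<in>insert m S. kernel_function M E s ((k(m := conditional_density (M m) m q \<phi>)) s)"
      using k kernel_function_conditional_density[OF False pa_m q \<phi>] by simp
    ultimately show ?thesis by blast
  qed
qed

section \<open>Conditional distributions\<close>

lemma measurable_density_prob_algebra:
  assumes "sigma_finite_measure Y"
    and g: "(\<lambda>(x, y). g x y) \<in> borel_measurable (X \<Otimes>\<^sub>M Y)"
    and g_1: "\<And>x. x \<in> space X \<Longrightarrow> (\<integral>\<^sup>+y. g x y \<partial>Y) = 1"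
  shows "(\<lambda>x. density Y (g x)) \<in> X \<rightarrow>\<^sub>M prob_algebra Y"
proof (rule measurable_prob_algebraI)
  have g_x: "g x \<in> borel_measurable Y" if "x \<in> space X" for x
    using measurable_compose[OF measurable_Pair1'[OF that] g] by simp
  show prob: "prob_space (density Y (g x))" if "x \<in> space X" for x
  proof (rule prob_spaceI)
    have "emeasure (density Y (g x)) (space Y) = (\<integral>\<^sup>+y. g x y * indicator (space Y) y \<partial>Y)"
      using g_x[OF that] by (simp add: emeasure_density)
    also have "\<dots> = 1"
      using g_1[OF that] by (simp cong: nn_integral_cong)
    finally show "emeasure (density Y (g x)) (space (density Y (g x))) = 1" by simp
  qed
  show "(\<lambda>x. density Y (g x)) \<in> X \<rightarrow>\<^sub>M subprob_algebra Y"
  proof (rule measurable_subprob_algebra)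
    fix A assume A: "A \<in> sets Y"
    have "(\<lambda>(x, y). g x y * indicator A y) \<in> borel_measurable (X \<Otimes>\<^sub>M Y)"
      using A g by measurable
    then have "(\<lambda>x. \<integral>\<^sup>+y. g x y * indicator A y \<partial>Y) \<in> borel_measurable X"
      by (rule sigma_finite_measure.borel_measurable_nn_integral[OF assms(1)])
    then show "(\<lambda>x. emeasure (density Y (g x)) A) \<in> borel_measurable X"
      using A g_x by (subst measurable_cong[where g = "\<lambda>x. \<integral>\<^sup>+y. g x y * indicator A y \<partial>Y"])
        (simp_all add: emeasure_density)
  qed (auto intro: prob_space_imp_subprob_space prob)
qed

lemma (in product_sigma_finite) emeasure_density_rectangle:
  assumes "finite N" "L \<subseteq> N"
    and h[measurable]: "h \<in> borel_measurable (PiM N M)"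
    and f[measurable]: "f \<in> borel_measurable (PiM L M)"
    and K[measurable]: "K \<in> PiM L M \<rightarrow>\<^sub>M subprob_algebra (PiM (N - L) M)"
    and K_density: "\<And>z. z \<in> space (PiM L M) \<Longrightarrow> K z = density (PiM (N - L) M) (g z)"
    and g: "\<And>z. z \<in> space (PiM L M) \<Longrightarrow> g z \<in> borel_measurable (PiM (N - L) M)"
    and split: "\<And>z y. z \<in> space (PiM L M) \<Longrightarrow> y \<in> space (PiM (N - L) M) \<Longrightarrow>
                  h (merge L (N - L) (z, y)) = f z * g z y"
    and B[measurable]: "B \<in> sets (PiM (N - L) M)" and C[measurable]: "C \<in> sets (PiM L M)"
  shows "emeasure (density (PiM N M) h) {x \<in> space (PiM N M). restrict x (N - L) \<in> B \<and> restrict x L \<in> C}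
       = (\<integral>\<^sup>+z\<in>C. emeasure (K z) B \<partial>density (PiM L M) f)"
proof -
  define S where "S = {x \<in> space (PiM N M). restrict x (N - L) \<in> B \<and> restrict x L \<in> C}"
  have U: "L \<union> (N - L) = N" using assms(2) by blast
  have fin: "finite L" "finite (N - L)" using assms(1,2) finite_subset by auto
  have [measurable]: "(\<lambda>x. restrict x L) \<in> PiM N M \<rightarrow>\<^sub>M PiM L M"
    "(\<lambda>x. restrict x (N - L)) \<in> PiM N M \<rightarrow>\<^sub>M PiM (N - L) M"
    using assms(2) by (auto intro: measurable_restrict_subset)
  have S[measurable]: "S \<in> sets (PiM N M)"
    unfolding S_def by measurable
  have "emeasure (density (PiM N M) h) S = (\<integral>\<^sup>+x. h x * indicator S x \<partial>PiM N M)"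
    by (rule emeasure_density) simp_all
  also have "\<dots> = (\<integral>\<^sup>+z. (\<integral>\<^sup>+y. h (merge L (N - L) (z, y)) * indicator S (merge L (N - L) (z, y)) \<partial>PiM (N - L) M) \<partial>PiM L M)"
    using product_nn_integral_fold[OF _ fin, of "\<lambda>x. h x * indicator S x"] U by simp
  also have "\<dots> = (\<integral>\<^sup>+z. f z * (emeasure (K z) B * indicator C z) \<partial>PiM L M)"
  proof (rule nn_integral_cong)
    fix z assume z: "z \<in> space (PiM L M)"
    have "indicator S (merge L (N - L) (z, y)) = (indicator C z * indicator B y :: ennreal)"
      if y: "y \<in> space (PiM (N - L) M)" for y
    proof -
      have "merge L (N - L) (z, y) \<in> space (PiM N M)"
        using measurable_space[OF measurable_merge, of "(z, y)" L M "N - L"] z y U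
        by (simp add: space_pair_measure)
      moreover have "restrict (merge L (N - L) (z, y)) L = z" "restrict (merge L (N - L) (z, y)) (N - L) = y"
        using restrict_merge_left[OF z] restrict_merge_right[OF _ y] by auto
      ultimately show ?thesis by (auto simp: S_def indicator_def)
    qed
    then have "(\<integral>\<^sup>+y. h (merge L (N - L) (z, y)) * indicator S (merge L (N - L) (z, y)) \<partial>PiM (N - L) M)
        = (\<integral>\<^sup>+y. (f z * indicator C z) * (g z y * indicator B y) \<partial>PiM (N - L) M)"
      using z split by (intro nn_integral_cong) (simp add: mult_ac)
    also have "\<dots> = (f z * indicator C z) * (\<integral>\<^sup>+y. g z y * indicator B y \<partial>PiM (N - L) M)"
      using g[OF z] B by (intro nn_integral_cmult borel_measurable_times_ennreal borel_measurable_indicator)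
    also have "\<dots> = f z * (emeasure (K z) B * indicator C z)"
      using z g[OF z] by (simp add: K_density emeasure_density mult_ac)
    finally show "(\<integral>\<^sup>+y. h (merge L (N - L) (z, y)) * indicator S (merge L (N - L) (z, y)) \<partial>PiM (N - L) M)
        = f z * (emeasure (K z) B * indicator C z)" .
  qed
  also have "\<dots> = (\<integral>\<^sup>+z\<in>C. emeasure (K z) B \<partial>density (PiM L M) f)"
    by (rule nn_integral_density[symmetric]) simp_all
  finally show ?thesis unfolding S_def .
qed

lemma PG_kernel_density:
  "PG N E M = {P. prob_space P \<and> (\<exists>k. (\<forall>s\<in>N. kernel_function M E s (k s))
                  \<and> P = density (PiM N M) (kernel_density E k N))}"
  by (simp add: PG_def kernel_density_def[abs_def])

lemma KG_kernel_density:
  "KG N E M A = {K. K \<in> PiM A M \<rightarrow>\<^sub>M prob_algebra (PiM (N - A) M) \<and>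
     (\<exists>k. (\<forall>s\<in>N - A. kernel_function M E s (k s)) \<and>
          (\<forall>xA \<in> space (PiM A M).
             K xA = density (PiM (N - A) M) (\<lambda>y. kernel_density E k (N - A) (merge A (N - A) (xA, y)))))}"
  unfolding KG_def kernel_density_def by (simp add: merge_def cong: prod.cong_simp)

lemma (in product_sigma_finite) version_of_conditional_density:
  assumes "finite N" "L \<subseteq> N"
    and h[measurable]: "h \<in> borel_measurable (PiM N M)"
    and f[measurable]: "f \<in> borel_measurable (PiM L M)"
    and g: "(\<lambda>(z, y). g z y) \<in> borel_measurable (PiM L M \<Otimes>\<^sub>M PiM (N - L) M)"
    and g_1: "\<And>z. z \<in> space (PiM L M) \<Longrightarrow> (\<integral>\<^sup>+y. g z y \<partial>PiM (N - L) M) = 1"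
    and split: "\<And>z y. h (merge L (N - L) (z, y)) = f z * g z y"
  shows "version_of_conditional N M L (density (PiM N M) h) (\<lambda>z. density (PiM (N - L) M) (g z))"
proof -
  have fin: "finite (N - L)" using assms(1) by simp
  have g_z: "g z \<in> borel_measurable (PiM (N - L) M)" if "z \<in> space (PiM L M)" for z
    using measurable_compose[OF measurable_Pair1'[OF that] g] by simp
  have K: "(\<lambda>z. density (PiM (N - L) M) (g z)) \<in> PiM L M \<rightarrow>\<^sub>M prob_algebra (PiM (N - L) M)"
    by (rule measurable_density_prob_algebra[OF sigma_finite[OF fin] g g_1])
  have "distr (density (PiM N M) h) (PiM L M) (\<lambda>x. restrict x L)
      = density (PiM L M) (\<lambda>z. \<integral>\<^sup>+y. h (merge L (N - L) (z, y)) \<partial>PiM (N - L) M)"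
    by (rule distr_restrict_density[OF assms(1,2) h])
  also have "\<dots> = density (PiM L M) f"
  proof (rule density_cong)
    show "(\<lambda>z. \<integral>\<^sup>+y. h (merge L (N - L) (z, y)) \<partial>PiM (N - L) M) \<in> borel_measurable (PiM L M)"
      using f g_1 g_z by (subst measurable_cong[where g = f]) (simp_all add: split nn_integral_cmult)
    show "AE z in PiM L M. (\<integral>\<^sup>+y. h (merge L (N - L) (z, y)) \<partial>PiM (N - L) M) = f z"
      using g_1 g_z by (simp add: split nn_integral_cmult)
  qed simp
  finally have marginal: "distr (density (PiM N M) h) (PiM L M) (\<lambda>x. restrict x L) = density (PiM L M) f" .
  show ?thesis
    unfolding version_of_conditional_def marginal space_density
    using emeasure_density_rectangle[OF assms(1,2) h f measurable_prob_algebraD[OF K] refl g_z split]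
    by blast
qed

lemma PiE_eq_rectangle:
  assumes "L \<subseteq> N" "\<And>i. i \<in> N \<Longrightarrow> A i \<subseteq> space (M i)"
  shows "Pi\<^sub>E N A = {x \<in> space (PiM N M). restrict x (N - L) \<in> Pi\<^sub>E (N - L) A \<and> restrict x L \<in> Pi\<^sub>E L A}"
  using assms by (auto simp: space_PiM PiE_iff extensional_def)

lemma (in product_sigma_finite) density_eq_if_version_of_conditional:
  assumes "finite N" "L \<subseteq> N" "prob_space P" and sets_P: "sets P = sets (PiM N M)"
    and version: "version_of_conditional N M L P K"
    and marginal: "distr P (PiM L M) (\<lambda>x. restrict x L) = density (PiM L M) f"
    and K: "K \<in> PiM L M \<rightarrow>\<^sub>M subprob_algebra (PiM (N - L) M)"
    and K_density: "\<And>z. z \<in> space (PiM L M) \<Longrightarrow> K z = density (PiM (N - L) M) (g z)"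
    and g: "\<And>z. z \<in> space (PiM L M) \<Longrightarrow> g z \<in> borel_measurable (PiM (N - L) M)"
    and h: "h \<in> borel_measurable (PiM N M)" and f: "f \<in> borel_measurable (PiM L M)"
    and split: "\<And>z y. h (merge L (N - L) (z, y)) = f z * g z y"
  shows "P = density (PiM N M) h"
proof (rule measure_eqI_PiM_finite[OF assms(1), where A = "\<lambda>_. space (PiM N M)"])
  have space_P: "space P = space (PiM N M)"
    using sets_eq_imp_space_eq[OF sets_P] .
  fix A assume A: "\<And>i. i \<in> N \<Longrightarrow> A i \<in> sets (M i)"
  have boxes: "Pi\<^sub>E (N - L) A \<in> sets (PiM (N - L) M)" "Pi\<^sub>E L A \<in> sets (PiM L M)"
    using A assms(1,2) by (auto intro!: sets_PiM_I_finite intro: finite_subset)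
  have box: "Pi\<^sub>E N A = {x \<in> space P. restrict x (N - L) \<in> Pi\<^sub>E (N - L) A \<and> restrict x L \<in> Pi\<^sub>E L A}"
    unfolding space_P using assms(2) sets.sets_into_space[OF A] by (rule PiE_eq_rectangle)
  have "emeasure P (Pi\<^sub>E N A) = (\<integral>\<^sup>+z\<in>Pi\<^sub>E L A. emeasure (K z) (Pi\<^sub>E (N - L) A) \<partial>density (PiM L M) f)"
    using version boxes unfolding version_of_conditional_def marginal box by blast
  also have "\<dots> = emeasure (density (PiM N M) h) (Pi\<^sub>E N A)"
    unfolding box space_P
    by (rule emeasure_density_rectangle[OF assms(1,2) h f K K_density g split boxes, symmetric])
  finally show "emeasure P (Pi\<^sub>E N A) = emeasure (density (PiM N M) h) (Pi\<^sub>E N A)" .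
qed (use sets_P prob_space.emeasure_space_1[OF \<open>prob_space P\<close>] sets_eq_imp_space_eq[OF sets_P]
       prod_algebraI_finite[OF assms(1), of "\<lambda>i. space (M i)" M] in \<open>auto simp: space_PiM\<close>)

lemma (in product_sigma_finite) conditional_in_KG:
  assumes dag: "is_dag N E" and "L \<subseteq> N" "\<forall>s\<in>L. pa E s \<subseteq> L" "P \<in> PG N E M"
  shows "\<exists>K\<in>KG N E M L. version_of_conditional N M L P K"
proof -
  have fin: "finite N" "finite (N - L)" and E_N: "E \<subseteq> N \<times> N" and "acyclic E"
    using dag by (auto simp: is_dag_def)
  obtain k where k: "\<forall>s\<in>N. kernel_function M E s (k s)"
    and P: "P = density (PiM N M) (kernel_density E k N)"
    using \<open>P \<in> PG N E M\<close> by (auto simp: PG_kernel_density)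
  have pa_N: "\<forall>s\<in>N. s \<in> N \<and> pa E s \<subseteq> N"
    using E_N by (auto simp: pa_def)
  define g where "g z y = kernel_density E k (N - L) (merge L (N - L) (z, y))" for z y
  have "(\<lambda>x. kernel_density E k (N - L) (merge L (N - L) x)) \<in> borel_measurable (PiM L M \<Otimes>\<^sub>M PiM (N - L) M)"
    using pa_N k \<open>L \<subseteq> N\<close> by (intro measurable_kernel_density[OF fin(2) _ _ measurable_merge]) auto
  then have g: "(\<lambda>(z, y). g z y) \<in> borel_measurable (PiM L M \<Otimes>\<^sub>M PiM (N - L) M)"
    by (simp add: g_def split_beta')
  have g_1: "(\<integral>\<^sup>+y. g z y \<partial>PiM (N - L) M) = 1" if "z \<in> space (PiM L M)" for z
    unfolding g_def using fin(2) \<open>acyclic E\<close> k pa_N \<open>L \<subseteq> N\<close> that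
    by (intro nn_integral_kernel_density_eq_1) auto
  have "(\<lambda>z. density (PiM (N - L) M) (g z)) \<in> PiM L M \<rightarrow>\<^sub>M prob_algebra (PiM (N - L) M)"
    by (rule measurable_density_prob_algebra[OF sigma_finite[OF fin(2)] g g_1])
  then have "(\<lambda>z. density (PiM (N - L) M) (g z)) \<in> KG N E M L"
    unfolding KG_kernel_density using k by (auto simp: g_def[abs_def])
  moreover have "version_of_conditional N M L P (\<lambda>z. density (PiM (N - L) M) (g z))"
    unfolding P
  proof (rule version_of_conditional_density[OF fin(1) \<open>L \<subseteq> N\<close> _ _ g g_1])
    show "kernel_density E k N \<in> borel_measurable (PiM N M)"
      using measurable_kernel_density[OF fin(1) k pa_N measurable_ident_sets[OF refl]] by simp
    show "kernel_density E k L \<in> borel_measurable (PiM L M)"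
      using \<open>L \<subseteq> N\<close> assms(3) k fin(1)
      by (intro measurable_kernel_density[OF _ _ _ measurable_ident_sets[OF refl]]) (auto intro: finite_subset)
    show "kernel_density E k N (merge L (N - L) (z, y)) = kernel_density E k L z * g z y" for z y
      using kernel_density_merge_split[OF fin(1) \<open>L \<subseteq> N\<close> assms(3)[rule_format], of k k]
      by (simp add: g_def)
  qed
  ultimately show ?thesis by blast
qed

lemma (in product_sigma_finite) marginal_chain_rule:
  fixes ord :: "'i \<Rightarrow> nat"
  assumes "finite N" "L \<subseteq> N" "inj_on ord L" "\<forall>s\<in>L. pa E s = {t\<in>L. ord t < ord s}"
    and "\<forall>s\<in>L. \<exists>\<phi>. prob_density (M s) \<phi>"
    and P: "prob_space (density (PiM N M) p)" and p[measurable]: "p \<in> borel_measurable (PiM N M)"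
  obtains k where "\<forall>s\<in>L. kernel_function M E s (k s)"
    "distr (density (PiM N M) p) (PiM L M) (\<lambda>x. restrict x L) = density (PiM L M) (kernel_density E k L)"
proof -
  define q where "q z = (\<integral>\<^sup>+y. p (merge L (N - L) (z, y)) \<partial>PiM (N - L) M)" for z
  have marginal: "distr (density (PiM N M) p) (PiM L M) (\<lambda>x. restrict x L) = density (PiM L M) q"
    unfolding q_def by (rule distr_restrict_density[OF assms(1,2) p])
  have q[measurable]: "q \<in> borel_measurable (PiM L M)"
    unfolding q_def using measurable_merge_compose[OF p assms(2)] assms(1)
    by (intro sigma_finite_measure.borel_measurable_nn_integral[OF sigma_finite]) auto
  have "prob_space (density (PiM L M) q)"
    unfolding marginal[symmetric] using assms(2)
    by (intro prob_space.prob_space_distr[OF P]) (simp add: measurable_restrict_subset)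
  then have "(\<integral>\<^sup>+z. q z \<partial>PiM L M) = 1"
    using prob_space.emeasure_space_1 by (force simp: emeasure_density cong: nn_integral_cong)
  then show thesis
    using chain_rule_kernel_density[OF finite_subset[OF assms(2,1)] assms(3,5,4) q] that
    unfolding marginal by blast
qed

lemma (in product_sigma_finite) PG_if_version_of_conditional:
  fixes ord :: "'i \<Rightarrow> nat"
  assumes "finite N" "E \<subseteq> N \<times> N" "L \<subseteq> N"
    and ord: "inj_on ord L" "\<forall>s\<in>L. pa E s = {t\<in>L. ord t < ord s}"
    and \<phi>: "\<forall>s\<in>L. \<exists>\<phi>. prob_density (M s) \<phi>"
    and P: "prob_space P" "P = density (PiM N M) p" and p: "p \<in> borel_measurable (PiM N M)"
    and K: "K \<in> KG N E M L" and version: "version_of_conditional N M L P K"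
  shows "P \<in> PG N E M"
proof -
  have fin: "finite L" "finite (N - L)" using assms(1,3) finite_subset by auto
  have pa_N: "\<forall>s\<in>N. s \<in> N \<and> pa E s \<subseteq> N"
    using assms(2) by (auto simp: pa_def)
  have pa_L: "\<forall>s\<in>L. s \<in> L \<and> pa E s \<subseteq> L"
    using ord(2) by auto
  obtain kL where kL: "\<forall>s\<in>L. kernel_function M E s (kL s)"
    and marginal: "distr P (PiM L M) (\<lambda>x. restrict x L) = density (PiM L M) (kernel_density E kL L)"
    using marginal_chain_rule[OF assms(1,3) ord \<phi> P(1)[unfolded P(2)] p] unfolding P(2) by blast
  obtain kR where K_meas: "K \<in> PiM L M \<rightarrow>\<^sub>M prob_algebra (PiM (N - L) M)"
    and kR: "\<forall>s\<in>N - L. kernel_function M E s (kR s)"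
    and K_density: "\<forall>z\<in>space (PiM L M).
          K z = density (PiM (N - L) M) (\<lambda>y. kernel_density E kR (N - L) (merge L (N - L) (z, y)))"
    using K unfolding KG_kernel_density by blast
  define k where "k = (\<lambda>s. if s \<in> L then kL s else kR s)"
  have k: "\<forall>s\<in>N. kernel_function M E s (k s)"
    using kL kR by (auto simp: k_def)
  have "P = density (PiM N M) (kernel_density E k N)"
  proof (rule density_eq_if_version_of_conditional[OF assms(1,3) P(1) _ version marginal
        measurable_prob_algebraD[OF K_meas]])
    show "sets P = sets (PiM N M)" using P(2) by simp
    show "K z = density (PiM (N - L) M) (\<lambda>y. kernel_density E kR (N - L) (merge L (N - L) (z, y)))"
      if "z \<in> space (PiM L M)" for z
      using K_density that by blast
    show "(\<lambda>y. kernel_density E kR (N - L) (merge L (N - L) (z, y))) \<in> borel_measurable (PiM (N - L) M)"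
      if "z \<in> space (PiM L M)" for z
      using pa_N \<open>L \<subseteq> N\<close>
      by (intro measurable_kernel_density[OF fin(2) kR _ measurable_compose[OF measurable_Pair1'[OF that] measurable_merge]])
        auto
    show "kernel_density E k N \<in> borel_measurable (PiM N M)"
      using measurable_kernel_density[OF assms(1) k pa_N measurable_ident_sets[OF refl]] by simp
    show "kernel_density E kL L \<in> borel_measurable (PiM L M)"
      using measurable_kernel_density[OF fin(1) kL pa_L measurable_ident_sets[OF refl]] by simp
    show "kernel_density E k N (merge L (N - L) (z, y))
        = kernel_density E kL L z * kernel_density E kR (N - L) (merge L (N - L) (z, y))" for z y
      unfolding k_def using pa_L by (intro kernel_density_merge_split[OF assms(1,3)]) blast
  qed
  then show ?thesis
    unfolding PG_kernel_density using P(1) k by blast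
qed

section \<open>Goals I and II\<close>

lemma KG_cong_pa:
  "(\<And>s. s \<in> N - A \<Longrightarrow> pa E s = pa E' s) \<Longrightarrow> KG N E M A = KG N E' M A"
  by (simp add: KG_def kernel_function_def cong: prod.cong_simp)

lemma (in product_sigma_finite) goal_I_if_goal_II:
  assumes "goal_II N E M E'"
  shows "goal_I N E M (E' - {(s, t). (s, t) \<in> E' \<and> s \<in> leaves N E \<and> t \<in> leaves N E})"
    (is "goal_I N E M ?E3")
proof -
  define L where "L = leaves N E"
  have dag': "is_dag N E'" and PG_sub: "PG N E M \<subseteq> PG N E' M" and pa_L: "\<forall>s\<in>L. pa E' s \<subseteq> L"
    using assms by (auto simp: goal_II_def L_def)
  have "L \<subseteq> N" by (auto simp: L_def leaves_def)
  have "is_dag N ?E3"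
    using dag' by (auto simp: is_dag_def intro: acyclic_subset)
  moreover have "L \<subseteq> roots N ?E3"
    using pa_L \<open>L \<subseteq> N\<close> by (fastforce simp: roots_def pa_def L_def)
  moreover have "KG N E' M L = KG N ?E3 M L"
    by (rule KG_cong_pa) (auto simp: pa_def L_def)
  moreover have "\<exists>K\<in>KG N E' M L. version_of_conditional N M L P K" if "P \<in> PG N E M" for P
    using conditional_in_KG[OF dag' \<open>L \<subseteq> N\<close> pa_L] PG_sub that by blast
  ultimately show ?thesis
    unfolding goal_I_def L_def by simp
qed

lemma (in product_sigma_finite) goal_II_if_goal_I:
  fixes ord :: "'i \<Rightarrow> nat"
  assumes dag: "is_dag N E"
    and \<phi>: "\<forall>s\<in>N. space (M s) \<noteq> {} \<longrightarrow> (\<exists>\<phi>. prob_density (M s) \<phi>)"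
    and goal: "goal_I N E M E'" and ord: "topological_ordering N E' ord"
  shows "goal_II N E M (E' \<union> {(s, t). s \<in> leaves N E \<and> t \<in> leaves N E \<and> ord s < ord t})"
    (is "goal_II N E M ?E2")
proof -
  define L where "L = leaves N E"
  have "L \<subseteq> N" by (auto simp: L_def leaves_def)
  have fin: "finite N" and E_N: "E \<subseteq> N \<times> N"
    using dag by (auto simp: is_dag_def)
  have E': "E' \<subseteq> N \<times> N" and roots: "L \<subseteq> roots N E'"
    and conditional: "\<forall>P\<in>PG N E M. \<exists>K\<in>KG N E' M L. version_of_conditional N M L P K"
    using goal by (auto simp: goal_I_def is_dag_def L_def)
  have inj: "inj_on ord L" and ord_less: "\<And>s t. (s, t) \<in> E' \<Longrightarrow> ord s < ord t"
    using ord \<open>L \<subseteq> N\<close> by (auto simp: topological_ordering_def bij_betw_def intro: inj_on_subset)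
  have E2: "?E2 \<subseteq> N \<times> N"
    using E' \<open>L \<subseteq> N\<close> by (auto simp: L_def)
  have "?E2 \<subseteq> inv_image less_than ord"
    using ord_less by auto
  then have "acyclic ?E2"
    by (rule acyclic_subset[OF wf_acyclic[OF wf_inv_image[OF wf_less_than]]])
  then have "is_dag N ?E2"
    using fin E2 by (simp add: is_dag_def)
  moreover have pa_L: "\<forall>s\<in>L. pa ?E2 s = {t\<in>L. ord t < ord s}"
    using roots by (auto simp: roots_def pa_def L_def)
  moreover have "PG N E M \<subseteq> PG N ?E2 M"
  proof
    fix P assume "P \<in> PG N E M"
    then obtain k where P: "prob_space P" "P = density (PiM N M) (kernel_density E k N)"
      and k: "\<forall>s\<in>N. kernel_function M E s (k s)"
      by (auto simp: PG_kernel_density)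
    have "space (PiM N M) \<noteq> {}"
      using prob_space.not_empty[OF P(1)] P(2) by simp
    then have "\<forall>s\<in>L. \<exists>\<phi>. prob_density (M s) \<phi>"
      using \<phi> \<open>L \<subseteq> N\<close> by auto
    moreover have "kernel_density E k N \<in> borel_measurable (PiM N M)"
      using E_N by (intro measurable_kernel_density[OF fin k _ measurable_ident_sets[OF refl]]) (auto simp: pa_def)
    moreover obtain K where "K \<in> KG N E' M L" "version_of_conditional N M L P K"
      using conditional \<open>P \<in> PG N E M\<close> by blast
    moreover have "KG N E' M L = KG N ?E2 M L"
      by (rule KG_cong_pa) (auto simp: pa_def L_def)
    ultimately show "P \<in> PG N ?E2 M"
      using PG_if_version_of_conditional[OF fin E2 \<open>L \<subseteq> N\<close> inj pa_L _ P] by simp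
  qed
  ultimately show ?thesis
    unfolding goal_II_def L_def by auto
qed

lemma kernel_function_cong_measure:
  "(\<And>i. i \<in> insert s (pa E s) \<Longrightarrow> M i = M' i) \<Longrightarrow> kernel_function M E s k = kernel_function M' E s k"
  unfolding kernel_function_def by (simp cong: PiM_cong)

lemma PG_cong:
  assumes "E \<subseteq> N \<times> N" "\<And>i. i \<in> N \<Longrightarrow> M i = M' i"
  shows "PG N E M = PG N E M'"
proof -
  have "kernel_function M E s k = kernel_function M' E s k" if "s \<in> N" for s k
    using assms that by (intro kernel_function_cong_measure) (auto simp: pa_def)
  moreover have "PiM N M = PiM N M'"
    using assms(2) by (rule PiM_cong[OF refl])
  ultimately show ?thesis
    unfolding PG_def by simp
qed

lemma KG_cong:
  assumes "E \<subseteq> N \<times> N" "A \<subseteq> N" "\<And>i. i \<in> N \<Longrightarrow> M i = M' i"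
  shows "KG N E M A = KG N E M' A"
proof -
  have "kernel_function M E s k = kernel_function M' E s k" if "s \<in> N - A" for s k
    using assms that by (intro kernel_function_cong_measure) (auto simp: pa_def)
  moreover have "PiM (N - A) M = PiM (N - A) M'" "PiM A M = PiM A M'"
    using assms(2,3) by (auto intro: PiM_cong)
  ultimately show ?thesis
    unfolding KG_def by simp
qed

lemma version_of_conditional_cong:
  assumes "A \<subseteq> N" "\<And>i. i \<in> N \<Longrightarrow> M i = M' i"
  shows "version_of_conditional N M A P K = version_of_conditional N M' A P K"
proof -
  have "PiM (N - A) M = PiM (N - A) M'" "PiM A M = PiM A M'"
    using assms by (auto intro: PiM_cong)
  then show ?thesis
    unfolding version_of_conditional_def by simp
qed

lemma goal_I_cong:
  assumes "E \<subseteq> N \<times> N" "\<And>i. i \<in> N \<Longrightarrow> M i = M' i"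
  shows "goal_I N E M E' = goal_I N E M' E'"
proof (cases "is_dag N E'")
  case True
  then have "KG N E' M (leaves N E) = KG N E' M' (leaves N E)"
    using assms(2) by (intro KG_cong) (auto simp: is_dag_def leaves_def)
  moreover have "version_of_conditional N M (leaves N E) = version_of_conditional N M' (leaves N E)"
    using assms(2) by (intro ext version_of_conditional_cong) (auto simp: leaves_def)
  ultimately show ?thesis
    using PG_cong[OF assms] by (simp add: goal_I_def)
qed (simp add: goal_I_def)

lemma goal_II_cong:
  assumes "E \<subseteq> N \<times> N" "\<And>i. i \<in> N \<Longrightarrow> M i = M' i"
  shows "goal_II N E M E' = goal_II N E M' E'"
  using PG_cong[OF assms] PG_cong[of E' N M M'] assms(2) by (auto simp: goal_II_def is_dag_def)

lemma product_sigma_finite_extend: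
  assumes "\<And>i. i \<in> N \<Longrightarrow> sigma_finite_measure (M i)"
  obtains M' where "product_sigma_finite M'" "\<And>i. i \<in> N \<Longrightarrow> M' i = M i"
proof
  show "product_sigma_finite (\<lambda>i. if i \<in> N then M i else count_space {})"
    using assms finite_measure_count_space[of "{}"]
    by (auto simp: product_sigma_finite_def finite_measure_def)
qed simp

lemma sigma_finite_measure_if_std_space: "std_space Ms \<Longrightarrow> sigma_finite_measure Ms"
  unfolding std_space_def
proof (elim disjE exE conjE)
  fix F assume "finite F" "Ms = count_space F"
  then show "sigma_finite_measure Ms"
    using finite_measure_count_space[of F] by (simp add: finite_measure_def)
next
  fix d :: nat assume "Ms = PiM {..<d} (\<lambda>_. lborel)"
  moreover have "product_sigma_finite (\<lambda>_::nat. lborel :: real measure)" ..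
  ultimately show "sigma_finite_measure Ms"
    using product_sigma_finite.sigma_finite by fastforce
qed

lemma prob_density_if_std_space:
  assumes "std_space Ms" "space Ms \<noteq> {}"
  shows "\<exists>\<phi>. prob_density Ms \<phi>"
  using assms(1) unfolding std_space_def
proof (elim disjE exE conjE)
  fix F assume F: "finite F" "Ms = count_space F"
  then obtain a where "a \<in> F" using assms(2) by auto
  then have "prob_density Ms (indicator {a})"
    using F by (simp add: prob_density_def ennreal_indicator emeasure_count_space_finite)
  then show ?thesis by blast
next
  fix d :: nat assume d: "Ms = PiM {..<d} (\<lambda>_. lborel)"
  interpret product_sigma_finite "\<lambda>_::nat. lborel :: real measure" ..
  define Q where "Q = (\<Pi>\<^sub>E i\<in>{..<d}. {0..1::real})"
  have Q: "Q \<in> sets Ms" unfolding Q_def d by (intro sets_PiM_I_finite) auto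
  have "emeasure Ms Q = 1"
    unfolding Q_def d by (subst emeasure_PiM) auto
  then have "prob_density Ms (indicator Q)"
    using Q by (simp add: prob_density_def ennreal_indicator)
  then show ?thesis by blast
qed

theorem proposition1:
  fixes N :: "'n set" and E :: "('n \<times> 'n) set" and M :: "'n \<Rightarrow> (nat \<Rightarrow> real) measure"
  assumes "is_dag N E"
    and "\<forall>s\<in>N. std_space (M s)"
  shows "(\<forall>E' ord. goal_I N E M E' \<and> topological_ordering N E' ord \<longrightarrow>
            goal_II N E M (E' \<union> {(s, t). s \<in> leaves N E \<and> t \<in> leaves N E \<and> ord s < ord t}))
       \<and> (\<forall>E'. goal_II N E M E' \<longrightarrow>
            goal_I N E M (E' - {(s, t). (s, t) \<in> E' \<and> s \<in> leaves N E \<and> t \<in> leaves N E}))"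
proof -
  \<comment> \<open>Only the measures on N matter; off N they are replaced to make the family sigma-finite.\<close>
  obtain M' where psf: "product_sigma_finite M'" and M': "\<And>i. i \<in> N \<Longrightarrow> M' i = M i"
    using product_sigma_finite_extend[of N M] assms(2) sigma_finite_measure_if_std_space by metis
  interpret product_sigma_finite M' by (fact psf)
  have E_N: "E \<subseteq> N \<times> N"
    using assms(1) by (simp add: is_dag_def)
  have \<phi>: "\<forall>s\<in>N. space (M' s) \<noteq> {} \<longrightarrow> (\<exists>\<phi>. prob_density (M' s) \<phi>)"
    using assms(2) M' prob_density_if_std_space by simp
  have "goal_I N E M E' = goal_I N E M' E'" "goal_II N E M E' = goal_II N E M' E'" for E'
    using M' by (intro goal_I_cong[OF E_N] goal_II_cong[OF E_N]; simp)+
  then show ?thesis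
    using goal_II_if_goal_I[OF assms(1) \<phi>] goal_I_if_goal_II by simp
qed

end
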